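(* Let $\lambda\geqslant\omega$ be a cardinal and $n$ a positive integer, and let $\mathscr{I}_\lambda^n$ carry any Hausdorff topology making it a topological semigroup. Let $S$ be a topological semigroup such that $S\times S$ is countably compact. Then every continuous homomorphism $h\colon\mathscr{I}_\lambda^n\to S$ is annihilating, i.e. $(s)h=(t)h$ for all $s,t\in\mathscr{I}_\lambda^n$.
   Context: A topological semigroup is a Hausdorff space with a continuous associative multiplication. For a set $X$ of cardinality $\lambda$, $\mathscr{I}(X)$ is the semigroup of all partial one-to-one maps of $X$ (including the empty map) under composition $x(\alpha\beta)=(x\alpha)\beta$ on $\operatorname{dom}(\alpha\beta)=\{y\in\operatorname{dom}\alpha: y\alpha\in\operatorname{dom}\beta\}$; the rank of $\alpha$ is $|\operatorname{ran}\alpha|$, and $\mathscr{I}_\lambda^n=\{\alpha\in\mathscr{I}(X):\operatorname{rank}\alpha\leqslant n\}$. A homomorphism is annihilating if it is constant. $\omega$ is the first infinite cardinal. *)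

theory Defs
  imports "HOL-Analysis.Analysis"
begin

definition countably_compact_space :: "'a topology \<Rightarrow> bool" where
  "countably_compact_space T \<longleftrightarrow>
    (\<forall>\<U>. countable \<U> \<longrightarrow> (\<forall>U\<in>\<U>. openin T U) \<longrightarrow> topspace T \<subseteq> \<Union>\<U>
       \<longrightarrow> (\<exists>\<F>\<subseteq>\<U>. finite \<F> \<and> topspace T \<subseteq> \<Union>\<F>))"

definition top_semigroup :: "'a topology \<Rightarrow> ('a \<Rightarrow> 'a \<Rightarrow> 'a) \<Rightarrow> bool" where
  "top_semigroup T m \<longleftrightarrow>
    Hausdorff_space T \<and>
    (\<forall>x\<in>topspace T. \<forall>y\<in>topspace T. m x y \<in> topspace T) \<and>
    (\<forall>x\<in>topspace T. \<forall>y\<in>topspace T. \<forall>z\<in>topspace T. m (m x y) z = m x (m y z)) \<and>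
    continuous_map (prod_topology T T) T (\<lambda>(x, y). m x y)"

definition partial_injections :: "'a set \<Rightarrow> ('a \<Rightarrow> 'a option) set" where
  "partial_injections X = {\<alpha>. dom \<alpha> \<subseteq> X \<and> ran \<alpha> \<subseteq> X \<and> inj_on \<alpha> (dom \<alpha>)}"

text \<open>Composition in the paper's right-action convention: x(\<alpha>\<beta>) = (x\<alpha>)\<beta>.\<close>
definition pmult :: "('a \<Rightarrow> 'a option) \<Rightarrow> ('a \<Rightarrow> 'a option) \<Rightarrow> ('a \<Rightarrow> 'a option)" where
  "pmult \<alpha> \<beta> = \<beta> \<circ>\<^sub>m \<alpha>"

definition prank :: "('a \<Rightarrow> 'a option) \<Rightarrow> nat" where
  "prank \<alpha> = card (ran \<alpha>)"

definition I_rank :: "'a set \<Rightarrow> nat \<Rightarrow> ('a \<Rightarrow> 'a option) set" where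
  "I_rank X n = {\<alpha> \<in> partial_injections X. finite (ran \<alpha>) \<and> prank \<alpha> \<le> n}"

end

theory Submission
  imports Defs
begin

(* If a_j b_j = c for all j and a_j b_k = d for all j \<noteq> k in S, let (x, y) be a
   cluster point of (a_j, b_j) in S \<times> S; then (x, y) lies in the closure of both the
   diagonal pairs and the off-diagonal pairs, and since multiplication is continuous
   into a Hausdorff space, c = xy = d.

   Algebraic part: every s of rank at most n factors as s = u_j v_j, where u_j maps
   dom s bijectively onto the j-th of infinitely many pairwise disjoint copies of
   dom s inside X and v_j undoes u_j before applying s; then u_j v_k = 0 for j \<noteq> k.

   Applying the topological part to a_j = h u_j, b_j = h v_j gives h s = h 0 for
   every s.  Continuity of h is only needed to know that h takes values in S. *)

definition cluster_point :: "'a topology \<Rightarrow> (nat \<Rightarrow> 'a) \<Rightarrow> 'a \<Rightarrow> bool" where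
  "cluster_point T z p \<longleftrightarrow>
     p \<in> topspace T \<and> (\<forall>W. openin T W \<and> p \<in> W \<longrightarrow> infinite {j. z j \<in> W})"

(* In a countably compact space every sequence has a cluster point: otherwise the
   complements of the closures of the tails form a countable increasing open cover
   without finite subcover. *)
lemma countably_compact_cluster_point:
  fixes z :: "nat \<Rightarrow> 'a"
  assumes cc: "countably_compact_space T" and z: "\<And>j. z j \<in> topspace T"
  shows "\<exists>p. cluster_point T z p"
proof (rule ccontr)
  assume no_cluster: "\<nexists>p. cluster_point T z p"
  define U where "U k = topspace T - T closure_of (z ` {k..})" for k
  have open_U: "openin T (U k)" for k
    unfolding U_def by auto
  have mono_U: "U i \<subseteq> U k" if "i \<le> k" for i k
    unfolding U_def using that by (intro Diff_mono order_refl closure_of_mono) auto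
  have cover: "topspace T \<subseteq> \<Union>(range U)"
  proof
    fix p assume p: "p \<in> topspace T"
    then obtain W where W: "openin T W" "p \<in> W" "finite {j. z j \<in> W}"
      using no_cluster unfolding cluster_point_def by blast
    then obtain k where "\<forall>j\<in>{j. z j \<in> W}. j < k"
      using finite_nat_set_iff_bounded by blast
    then have "W \<inter> z ` {k..} = {}"
      by fastforce
    then have "p \<notin> T closure_of (z ` {k..})"
      using W unfolding in_closure_of by blast
    then show "p \<in> \<Union>(range U)"
      using p unfolding U_def by blast
  qed
  obtain F where F: "F \<subseteq> range U" "finite F" "topspace T \<subseteq> \<Union>F"
    using cc[unfolded countably_compact_space_def, rule_format, of "range U"] open_U cover
    by blast
  then obtain I where I: "finite I" "F = U ` I"
    by (meson finite_subset_image)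
  then obtain K where "\<forall>i\<in>I. i \<le> K"
    using finite_nat_set_iff_bounded_le by blast
  then have "topspace T \<subseteq> U K"
    using F(3) I(2) mono_U by blast
  moreover have "z K \<in> T closure_of (z ` {K..})"
    using z by (intro closure_of_subset[THEN subsetD]) auto
  ultimately show False
    using z[of K] unfolding U_def by blast
qed

lemma continuous_map_const_on_closure:
  assumes "Hausdorff_space Y" and "continuous_map X Y f" and "c \<in> topspace Y"
    and "p \<in> X closure_of A" and "\<And>q. q \<in> A \<Longrightarrow> f q = c"
  shows "f p = c"
proof -
  let ?C = "{q \<in> topspace X. f q \<in> {c}}"
  have "closedin X ?C"
    using closedin_continuous_map_preimage[OF assms(2) closedin_Hausdorff_singleton[OF assms(1,3)]] .
  moreover have "p \<in> X closure_of ?C"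
    using assms(4,5) closure_of_restrict[of X A] closure_of_mono[of "topspace X \<inter> A" ?C X]
    by auto
  ultimately show ?thesis
    by (simp add: closure_of_closedin)
qed

lemma infinite_two_elements:
  assumes "infinite A"
  obtains a b where "a \<in> A" "b \<in> A" "a \<noteq> b"
proof -
  obtain B where "B \<subseteq> A" "finite B" "card B = 2"
    using infinite_arbitrarily_large[OF assms] by blast
  then show ?thesis
    using that by (auto simp: card_2_iff)
qed

lemma top_semigroup_diagonal_eq_off_diagonal:
  fixes a b :: "nat \<Rightarrow> 'b"
  assumes S: "top_semigroup S m" and cc: "countably_compact_space (prod_topology S S)"
    and ab: "\<And>j. a j \<in> topspace S" "\<And>j. b j \<in> topspace S"
    and diag: "\<And>j. m (a j) (b j) = c" and off_diag: "\<And>j k. j \<noteq> k \<Longrightarrow> m (a j) (b k) = d"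
  shows "c = d"
proof -
  have Haus: "Hausdorff_space S"
    and cont: "continuous_map (prod_topology S S) S (\<lambda>(x, y). m x y)"
    and closed: "\<And>x y. x \<in> topspace S \<Longrightarrow> y \<in> topspace S \<Longrightarrow> m x y \<in> topspace S"
    using S unfolding top_semigroup_def by auto
  obtain p where p: "cluster_point (prod_topology S S) (\<lambda>j. (a j, b j)) p"
    using countably_compact_cluster_point[OF cc, of "\<lambda>j. (a j, b j)"] ab by auto
  obtain x y where xy: "p = (x, y)"
    by fastforce
  have cluster: "\<forall>W. openin (prod_topology S S) W \<and> p \<in> W \<longrightarrow> infinite {j. (a j, b j) \<in> W}"
    using p unfolding cluster_point_def by blast
  have c_in: "c \<in> topspace S"
    using diag[of 0] closed ab by metis
  have d_in: "d \<in> topspace S"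
    using off_diag[of 0 1] closed ab by (metis zero_neq_one)
  have "p \<in> prod_topology S S closure_of range (\<lambda>j. (a j, b j))"
    unfolding in_closure_of
  proof (intro conjI allI impI)
    show "p \<in> topspace (prod_topology S S)"
      using p unfolding cluster_point_def by blast
    fix W assume "p \<in> W \<and> openin (prod_topology S S) W"
    then have "infinite {j. (a j, b j) \<in> W}"
      using cluster by blast
    then show "\<exists>q. q \<in> range (\<lambda>j. (a j, b j)) \<and> q \<in> W"
      by (metis (mono_tags, lifting) empty_Collect_eq finite.emptyI rangeI)
  qed
  then have "(\<lambda>(x, y). m x y) p = c"
    by (rule continuous_map_const_on_closure[OF Haus cont c_in]) (auto simp: diag)
  then have "m x y = c"
    using xy by simp
  moreover have "p \<in> prod_topology S S closure_of {(a j, b k) | j k. j \<noteq> k}"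
    unfolding in_closure_of
  proof (intro conjI allI impI)
    show "p \<in> topspace (prod_topology S S)"
      using p unfolding cluster_point_def by blast
    fix W assume W: "p \<in> W \<and> openin (prod_topology S S) W"
    then obtain A B where AB: "openin S A" "openin S B" "x \<in> A" "y \<in> B" "A \<times> B \<subseteq> W"
      using openin_prod_topology_alt xy by metis
    have AB_open: "openin (prod_topology S S) (A \<times> B)"
      using AB by (simp add: openin_prod_Times_iff)
    have "p \<in> A \<times> B"
      using AB xy by simp
    then have "infinite {j. (a j, b j) \<in> A \<times> B}"
      using cluster[rule_format, OF conjI[OF AB_open]] by blast
    then obtain j k where "(a j, b j) \<in> A \<times> B" "(a k, b k) \<in> A \<times> B" "j \<noteq> k"
      by (rule infinite_two_elements) auto
    then show "\<exists>q. q \<in> {(a j, b k) | j k. j \<noteq> k} \<and> q \<in> W"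
      using AB(5) by blast
  qed
  then have "(\<lambda>(x, y). m x y) p = d"
    by (rule continuous_map_const_on_closure[OF Haus cont d_in]) (auto simp: off_diag)
  then have "m x y = d"
    using xy by simp
  ultimately show ?thesis
    by simp
qed

definition pembed :: "'a set \<Rightarrow> ('a \<Rightarrow> 'b) \<Rightarrow> ('a \<Rightarrow> 'b option)" where
  "pembed D g = (\<lambda>d. if d \<in> D then Some (g d) else None)"

lemma dom_pembed [simp]: "dom (pembed D g) = D"
  by (auto simp: pembed_def dom_def)

lemma ran_pembed [simp]: "ran (pembed D g) = g ` D"
  by (auto simp: pembed_def ran_def)

lemma pembed_cong: "(\<And>d. d \<in> D \<Longrightarrow> g d = g' d) \<Longrightarrow> pembed D g = pembed D g'"
  by (auto simp: pembed_def)

lemma pembed_empty [simp]: "pembed {} g = Map.empty"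
  by (simp add: pembed_def)

lemma pmult_pembed:
  "pmult (pembed D g) (pembed E g') = pembed {d \<in> D. g d \<in> E} (g' \<circ> g)"
  by (auto simp: pmult_def pembed_def map_comp_def)

lemma pmult_pembed_id_dom: "pmult (pembed (dom s) id) s = s"
proof
  fix d show "pmult (pembed (dom s) id) s d = s d"
    by (cases "s d") (auto simp: pmult_def pembed_def map_comp_def)
qed

lemma pmult_empty_left [simp]: "pmult Map.empty s = Map.empty"
  by (simp add: pmult_def)

lemma pmult_assoc: "pmult (pmult a b) c = pmult a (pmult b c)"
  by (auto simp: pmult_def map_comp_def fun_eq_iff split: option.split)

lemma dom_ran_bij:
  assumes "inj_on s (dom s)"
  shows "bij_betw (\<lambda>d. the (s d)) (dom s) (ran s)"
  unfolding bij_betw_def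
proof
  show "inj_on (\<lambda>d. the (s d)) (dom s)"
    using assms unfolding inj_on_def dom_def by force
  show "(\<lambda>d. the (s d)) ` dom s = ran s"
    unfolding dom_def ran_def by force
qed

lemma pembed_in_I_rank:
  assumes "finite D" "D \<subseteq> X" "g ` D \<subseteq> X" "inj_on g D" "card D \<le> n"
  shows "pembed D g \<in> I_rank X n"
proof -
  have "inj_on (pembed D g) D"
    using assms(4) by (auto simp: inj_on_def pembed_def)
  then show ?thesis
    using assms by (auto simp: I_rank_def partial_injections_def prank_def card_image)
qed

lemma pmult_in_I_rank:
  assumes "\<alpha> \<in> I_rank X n" "\<beta> \<in> I_rank X n"
  shows "pmult \<alpha> \<beta> \<in> I_rank X n"
proof -
  have ran_sub: "ran (pmult \<alpha> \<beta>) \<subseteq> ran \<beta>"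
    by (auto simp: pmult_def ran_def map_comp_Some_iff)
  have dom_sub: "dom (pmult \<alpha> \<beta>) \<subseteq> dom \<alpha>"
    by (auto simp: pmult_def map_comp_Some_iff)
  have inj: "inj_on (pmult \<alpha> \<beta>) (dom (pmult \<alpha> \<beta>))"
    using assms unfolding I_rank_def partial_injections_def
    by (auto simp: inj_on_def pmult_def map_comp_Some_iff dom_def)
  have "finite (ran \<beta>)" "card (ran \<beta>) \<le> n"
    using assms(2) by (auto simp: I_rank_def prank_def)
  then show ?thesis
    using assms ran_sub dom_sub inj card_mono[of "ran \<beta>" "ran (pmult \<alpha> \<beta>)"]
    by (auto simp: I_rank_def partial_injections_def prank_def intro: finite_subset)
qed

lemma disjoint_copies:
  assumes "infinite X" and "finite D"
  obtains g :: "nat \<Rightarrow> 'b \<Rightarrow> 'a"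
  where "\<And>j. g j ` D \<subseteq> X"
    and "\<And>j k d d'. d \<in> D \<Longrightarrow> d' \<in> D \<Longrightarrow> g j d = g k d' \<longleftrightarrow> j = k \<and> d = d'"
proof -
  obtain f :: "nat \<Rightarrow> 'a" where f: "inj f" "range f \<subseteq> X"
    using infinite_countable_subset[OF assms(1)] by blast
  have "countable D"
    using assms(2) by (rule countable_finite)
  then have "inj_on (to_nat_on D) D"
    by (rule inj_on_to_nat_on)
  then show ?thesis
    using f by (intro that[of "\<lambda>j d. f (prod_encode (j, to_nat_on D d))"])
      (auto simp: inj_eq prod_encode_eq inj_on_eq_iff)
qed

lemma I_rank_factorisations:
  assumes X: "infinite X" and s: "s \<in> I_rank X n"
  obtains u v :: "nat \<Rightarrow> 'a \<Rightarrow> 'a option"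
  where "\<And>j. u j \<in> I_rank X n" "\<And>j. v j \<in> I_rank X n"
    and "\<And>j. pmult (u j) (v j) = s"
    and "\<And>j k. j \<noteq> k \<Longrightarrow> pmult (u j) (v k) = Map.empty"
proof -
  define D where "D = dom s"
  have s_props: "D \<subseteq> X" "inj_on s D" "finite (ran s)" "card (ran s) \<le> n"
    using s unfolding D_def I_rank_def partial_injections_def prank_def by auto
  have bij: "bij_betw (\<lambda>d. the (s d)) D (ran s)"
    using dom_ran_bij s_props(2) unfolding D_def by blast
  have finD: "finite D" and cardD: "card D \<le> n"
    using s_props(3,4) bij_betw_finite[OF bij] bij_betw_same_card[OF bij] by auto
  obtain g :: "nat \<Rightarrow> 'a \<Rightarrow> 'a" where g_X: "\<And>j. g j ` D \<subseteq> X"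
    and g_eq: "\<And>j k d d'. d \<in> D \<Longrightarrow> d' \<in> D \<Longrightarrow> g j d = g k d' \<longleftrightarrow> j = k \<and> d = d'"
    using disjoint_copies[OF X finD] by blast
  have inj_g: "inj_on (g j) D" for j
    using g_eq by (auto intro: inj_onI)
  (* u j moves D onto its j-th copy, w j moves the j-th copy back; v j = w j s. *)
  define u where "u j = pembed D (g j)" for j
  define w where "w j = pembed (g j ` D) (inv_into D (g j))" for j
  have u_in: "u j \<in> I_rank X n" for j
    unfolding u_def using finD s_props(1) g_X inj_g cardD by (rule pembed_in_I_rank)
  have w_in: "w j \<in> I_rank X n" for j
    unfolding w_def using finD g_X s_props(1) cardD card_image[OF inj_g]
    by (intro pembed_in_I_rank) (auto simp: inj_on_inv_into inv_into_into)
  have uw_same: "pmult (u j) (w j) = pembed D id" for j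
  proof -
    have "{d \<in> D. g j d \<in> g j ` D} = D"
      by blast
    then show ?thesis
      unfolding u_def w_def pmult_pembed using inj_g[of j] by (auto intro: pembed_cong)
  qed
  have uw_diff: "pmult (u j) (w k) = Map.empty" if "j \<noteq> k" for j k
  proof -
    have no_overlap: "{d \<in> D. g j d \<in> g k ` D} = {}"
      using that g_eq by auto
    show ?thesis
      unfolding u_def w_def pmult_pembed no_overlap by simp
  qed
  show ?thesis
  proof (rule that[of u "\<lambda>j. pmult (w j) s"])
    show "u j \<in> I_rank X n" "pmult (w j) s \<in> I_rank X n" for j
      using u_in w_in s by (auto intro: pmult_in_I_rank)
    show "pmult (u j) (pmult (w j) s) = s" for j
      by (simp add: pmult_assoc[symmetric] uw_same D_def pmult_pembed_id_dom)
    show "pmult (u j) (pmult (w k) s) = Map.empty" if "j \<noteq> k" for j k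
      by (simp add: pmult_assoc[symmetric] uw_diff[OF that])
  qed
qed

theorem theorem8:
  fixes X :: "'a set" and n :: nat
    and T :: "('a \<Rightarrow> 'a option) topology"
    and S :: "'b topology" and m :: "'b \<Rightarrow> 'b \<Rightarrow> 'b"
    and h :: "('a \<Rightarrow> 'a option) \<Rightarrow> 'b"
  assumes "infinite X"
    and "n \<ge> 1"
    and "topspace T = I_rank X n"
    and "top_semigroup T pmult"
    and "top_semigroup S m"
    and "countably_compact_space (prod_topology S S)"
    and "continuous_map T S h"
    and "\<And>s t. s \<in> I_rank X n \<Longrightarrow> t \<in> I_rank X n \<Longrightarrow> h (pmult s t) = m (h s) (h t)"
  shows "\<forall>s\<in>I_rank X n. \<forall>t\<in>I_rank X n. h s = h t"
proof -
  have h_in: "h t \<in> topspace S" if "t \<in> I_rank X n" for t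
    using continuous_map_image_subset_topspace[OF assms(7)] assms(3) that by blast
  have "h s = h Map.empty" if s: "s \<in> I_rank X n" for s
  proof (rule I_rank_factorisations[OF assms(1) s])
    fix u v :: "nat \<Rightarrow> 'a \<Rightarrow> 'a option"
    assume u: "\<And>j. u j \<in> I_rank X n" and v: "\<And>j. v j \<in> I_rank X n"
      and diag: "\<And>j. pmult (u j) (v j) = s"
      and off_diag: "\<And>j k. j \<noteq> k \<Longrightarrow> pmult (u j) (v k) = Map.empty"
    show ?thesis
    proof (rule top_semigroup_diagonal_eq_off_diagonal[OF assms(5,6), of "\<lambda>j. h (u j)" "\<lambda>j. h (v j)"])
      show "h (u j) \<in> topspace S" "h (v j) \<in> topspace S" for j
        using h_in u v by blast+
      show "m (h (u j)) (h (v j)) = h s" for j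
        using assms(8)[OF u[of j] v[of j]] diag[of j] by simp
      show "m (h (u j)) (h (v k)) = h Map.empty" if "j \<noteq> k" for j k
        using assms(8)[OF u[of j] v[of k]] off_diag[OF that] by simp
    qed
  qed
  then show ?thesis
    by simp
qed

end
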